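(* Fix positive integers $r,n,k$ and consider $\mathbb{C}^{rn}$ with a fixed basis indexed by $[r]\times[n]$. Let the torus $T=(\mathbb{C}^* )^n$ act on $\mathbb{C}^{rn}$ by letting $\mathbf{t}=(t_1,\dots,t_n)$ multiply the $(i,j)$-th coordinate by $t_j$, and consider the induced action on the Grassmannian $G(k,rn)$ of $k$-dimensional subspaces of $\mathbb{C}^{rn}$, embedded in $\mathbb{P}(\bigwedge^k\mathbb{C}^{rn})$ by the Plücker embedding. Let $p\in G(k,rn)$ and let $\mathcal{M}$ be the polymatroid associated with $p$. Then the lattice polytope representing the projective toric variety $\overline{Tp}$ is isomorphic to the base polytope of $\mathcal{M}$.
   Context: A polymatroid on a finite set $E$ is given by a rank function $r:\mathcal{P}(E)\to\mathbb{Z}_{\ge0}$ with $r(\emptyset)=0$, $r$ monotone ($Y\subseteq X\Rightarrow r(Y)\le r(X)$) and submodular ($r(X\cup Y)+r(X\cap Y)\le r(X)+r(Y)$). Its base polytope is $\{x\in\mathbb{R}_{\ge0}^E: x\cdot\mathbf{e}_U\le r(U)\ \forall U\subseteq E,\ x\cdot\mathbf{e}_E=r(E)\}$, where $\mathbf{e}_U$ is the indicator vector of $U$. The polymatroid associated with $p$: represent $p$ by a full-rank $k\times rn$ matrix $A$ whose rows span the subspace $p$; for $j\in[n]$ let $W_j\subseteq\mathbb{C}^k$ be the span of the $r$ columns of $A$ indexed by $(i,j)$, $i\in[r]$; then $\mathcal{M}$ is the polymatroid on $[n]$ with rank function $r(S)=\dim\sum_{j\in S}W_j$ (independent of the choice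 of $A$). The lattice polytope representing a projective toric variety given as the closure of a torus orbit parameterised by monomials is the convex hull of the exponent vectors of those monomials. *)

theory Defs
  imports "Jordan_Normal_Form.DL_Rank" "Jordan_Normal_Form.DL_Submatrix" "Jordan_Normal_Form.Determinant"
begin

text \<open>Coordinates of C^(rn) are indexed by pairs (i,j) in [r] x [n]; we encode the
  pair (i,j) (0-based, i < r, j < n) as the column index r*j + i of a k x rn matrix.\<close>
definition col_idx :: "nat \<Rightarrow> nat \<Rightarrow> nat \<Rightarrow> nat" where
  "col_idx r i j = r * j + i"

definition pluecker :: "complex mat \<Rightarrow> nat set \<Rightarrow> complex" where
  "pluecker A J = det (submatrix A UNIV J)"

text \<open>Exponent of t in the torus action on the Pluecker coordinate p_J:
  t multiplies e_J by prod_j t_j^(number of i with (i,j) in J).  Points of R^n are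
  represented as functions nat => real vanishing outside {..<n}.\<close>
definition torus_weight :: "nat \<Rightarrow> nat \<Rightarrow> nat set \<Rightarrow> (nat \<Rightarrow> real)" where
  "torus_weight r n J = (\<lambda>j. if j < n then real (card {i. i < r \<and> col_idx r i j \<in> J}) else 0)"

text \<open>Exponent vectors of the monomials parametrising the orbit closure of p = rowspace A
  in the Pluecker embedding: t \<mapsto> [t^(w(J)) p_J]_J, only nonzero coordinates matter.\<close>
definition orbit_exponents :: "nat \<Rightarrow> nat \<Rightarrow> nat \<Rightarrow> complex mat \<Rightarrow> (nat \<Rightarrow> real) set" where
  "orbit_exponents r n k A =
     {torus_weight r n J | J. J \<subseteq> {..< r * n} \<and> card J = k \<and> pluecker A J \<noteq> 0}"

definition conv_hull :: "nat \<Rightarrow> (nat \<Rightarrow> real) set \<Rightarrow> (nat \<Rightarrow> real) set" where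
  "conv_hull n S = {x. \<exists>P c. finite P \<and> P \<subseteq> S \<and> (\<forall>p\<in>P. c p \<ge> 0) \<and> (\<Sum>p\<in>P. c p) = 1 \<and>
                         x = (\<lambda>j. \<Sum>p\<in>P. c p * p j)}"

definition orbit_polytope :: "nat \<Rightarrow> nat \<Rightarrow> nat \<Rightarrow> complex mat \<Rightarrow> (nat \<Rightarrow> real) set" where
  "orbit_polytope r n k A = conv_hull n (orbit_exponents r n k A)"

text \<open>Rank function of the polymatroid associated with p = rowspace A:
  r(S) = dim (sum_{j in S} W_j), W_j the span of the columns (i,j), i in [r];
  the sum of the W_j is the span of all these columns, i.e. the column space of the
  submatrix formed by them.\<close>
definition pm_rank :: "nat \<Rightarrow> nat \<Rightarrow> complex mat \<Rightarrow> nat set \<Rightarrow> nat" where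
  "pm_rank r k A S = vec_space.rank k (submatrix A UNIV {col_idx r i j | i j. i < r \<and> j \<in> S})"

definition base_polytope :: "nat \<Rightarrow> (nat set \<Rightarrow> nat) \<Rightarrow> (nat \<Rightarrow> real) set" where
  "base_polytope n rk = {x. (\<forall>j. n \<le> j \<longrightarrow> x j = 0) \<and> (\<forall>j<n. 0 \<le> x j) \<and>
      (\<forall>U. U \<subseteq> {..<n} \<longrightarrow> (\<Sum>j\<in>U. x j) \<le> real (rk U)) \<and>
      (\<Sum>j<n. x j) = real (rk {..<n})}"

text \<open>Isomorphism of lattice polytopes in R^n (lattice Z^n): related by an affine
  lattice automorphism x \<mapsto> Lx + b with L in GL_n(Z) and b in Z^n.\<close>
definition lattice_iso :: "nat \<Rightarrow> (nat \<Rightarrow> real) set \<Rightarrow> (nat \<Rightarrow> real) set \<Rightarrow> bool" where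
  "lattice_iso n P Q \<longleftrightarrow> (\<exists>(L::nat \<Rightarrow> nat \<Rightarrow> int) (M::nat \<Rightarrow> nat \<Rightarrow> int) (b::nat \<Rightarrow> int).
      (\<forall>i<n. \<forall>l<n. (\<Sum>j<n. L i j * M j l) = (if i = l then 1 else 0)) \<and>
      (\<forall>i<n. \<forall>l<n. (\<Sum>j<n. M i j * L j l) = (if i = l then 1 else 0)) \<and>
      (\<lambda>x. \<lambda>i. if i < n then (\<Sum>j<n. of_int (L i j) * x j) + of_int (b i) else 0) ` P = Q)"

end

theory Submission
  imports Defs
begin

text \<open>
  A Pluecker coordinate p_J is nonzero exactly when the columns J form a basis of the column space
  of A, and the torus acts on p_J with weight (|J \<inter> block j|)_j, where block j holds the r columns
  indexed by j.  Counting the columns of a basis in a union of blocks bounds that count by the rank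
  of the union, so all weights lie in the base polytope of the polymatroid.  Conversely, the base
  polyhedron of any set function vanishing on the empty set is the convex hull of its greedy
  vectors (Edmonds), and for this polymatroid the greedy vector of an ordering of the blocks is the
  weight of the basis obtained by augmenting block by block.  The two polytopes therefore coincide
  and the identity is the required lattice isomorphism.
\<close>

section \<open>Convex hulls\<close>

lemma conv_hull_point: "p \<in> S \<Longrightarrow> p \<in> conv_hull m S"
  unfolding conv_hull_def
  by (rule CollectI, rule exI[of _ "{p}"], rule exI[of _ "\<lambda>_. 1"]) auto

lemma conv_hull_mono: "S \<subseteq> T \<Longrightarrow> conv_hull m S \<subseteq> conv_hull m T"
  unfolding conv_hull_def by blast

lemma sum_extend_by_zero:
  assumes "finite Q" "P \<subseteq> Q"
  shows "(\<Sum>p\<in>Q. (if p \<in> P then c p else 0) * g p) = (\<Sum>p\<in>P. c p * (g p :: real))"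
proof -
  have "(\<Sum>p\<in>Q. (if p \<in> P then c p else 0) * g p) = (\<Sum>p\<in>Q. if p \<in> P then c p * g p else 0)"
    by (rule sum.cong) auto
  also have "\<dots> = (\<Sum>p\<in>Q \<inter> P. c p * g p)"
    using assms(1) by (simp add: sum.inter_restrict)
  also have "Q \<inter> P = P" using assms(2) by blast
  finally show ?thesis .
qed

lemma conv_hull_segment:
  assumes "x \<in> conv_hull m S" "y \<in> conv_hull m S" "0 \<le> t" "t \<le> 1"
  shows "(\<lambda>j. t * x j + (1 - t) * y j) \<in> conv_hull m S"
proof -
  obtain P c where P: "finite P" "P \<subseteq> S" "\<forall>p\<in>P. c p \<ge> 0" "sum c P = 1" "x = (\<lambda>j. \<Sum>p\<in>P. c p * p j)"
    using assms(1) unfolding conv_hull_def by blast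
  obtain Q d where Q: "finite Q" "Q \<subseteq> S" "\<forall>p\<in>Q. d p \<ge> 0" "sum d Q = 1" "y = (\<lambda>j. \<Sum>p\<in>Q. d p * p j)"
    using assms(2) unfolding conv_hull_def by blast
  define e where "e p = t * (if p \<in> P then c p else 0) + (1 - t) * (if p \<in> Q then d p else 0)" for p
  have e: "(\<Sum>p\<in>P \<union> Q. e p * g p) = t * (\<Sum>p\<in>P. c p * g p) + (1 - t) * (\<Sum>p\<in>Q. d p * g p)" for g
  proof -
    have "(\<Sum>p\<in>P \<union> Q. e p * g p) = t * (\<Sum>p\<in>P \<union> Q. (if p \<in> P then c p else 0) * g p)
        + (1 - t) * (\<Sum>p\<in>P \<union> Q. (if p \<in> Q then d p else 0) * g p)"
      by (simp only: e_def distrib_right sum.distrib mult.assoc sum_distrib_left)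
    then show ?thesis using sum_extend_by_zero[of "P \<union> Q"] P(1) Q(1) by simp
  qed
  show ?thesis
    unfolding conv_hull_def
  proof (intro CollectI exI conjI)
    show "finite (P \<union> Q)" "P \<union> Q \<subseteq> S" using P Q by auto
    show "\<forall>p\<in>P \<union> Q. 0 \<le> e p" using P Q assms(3,4) unfolding e_def by auto
    show "sum e (P \<union> Q) = 1" using e[of "\<lambda>_. 1"] P Q by simp
    show "(\<lambda>j. t * x j + (1 - t) * y j) = (\<lambda>j. \<Sum>p\<in>P \<union> Q. e p * p j)"
      using e P Q by auto
  qed
qed

lemma conv_hull_convex_comb:
  assumes "finite I" "\<forall>i\<in>I. v i \<in> conv_hull m S" "\<forall>i\<in>I. 0 \<le> c i" "sum c I = 1"
  shows "(\<lambda>j. \<Sum>i\<in>I. c i * v i j) \<in> conv_hull m S"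
  using assms
proof (induction I arbitrary: c rule: finite_induct)
  case empty
  then show ?case by simp
next
  case (insert i I)
  have ci: "c i + sum c I = 1" using insert by simp
  have sI: "sum c I \<ge> 0" using insert by (simp add: sum_nonneg)
  show ?case
  proof (cases "c i = 1")
    case True
    then have "\<forall>i'\<in>I. c i' = 0" using ci insert sum_nonneg_eq_0_iff
      by (metis add_cancel_right_right insert_iff)
    then have "(\<lambda>j. \<Sum>i\<in>insert i I. c i * v i j) = v i"
      using insert True by auto
    then show ?thesis using insert by simp
  next
    case False
    define s where "s = sum c I"
    have s: "s > 0" using False ci sI unfolding s_def by auto
    define y where "y = (\<lambda>j. \<Sum>i'\<in>I. (c i' / s) * v i' j)"
    have "y \<in> conv_hull m S"
      unfolding y_def
    proof (rule insert.IH)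
      show "\<forall>i\<in>I. v i \<in> conv_hull m S" "\<forall>i'\<in>I. 0 \<le> c i' / s" using insert s by auto
      show "(\<Sum>i\<in>I. c i / s) = 1" using s unfolding s_def
        by (simp add: sum_divide_distrib[symmetric])
    qed
    then have "(\<lambda>j. c i * v i j + (1 - c i) * y j) \<in> conv_hull m S"
      using insert sI ci by (intro conv_hull_segment) auto
    moreover have "(1 - c i) * y j = (\<Sum>i'\<in>I. c i' * v i' j)" for j
    proof -
      have "1 - c i = s" using ci unfolding s_def by simp
      then show ?thesis using s unfolding y_def sum_distrib_left by (intro sum.cong) auto
    qed
    ultimately show ?thesis using insert by simp
  qed
qed

lemma conv_hull_Minkowski_sum:
  assumes "x \<in> conv_hull m S1" "y \<in> conv_hull m S2" "\<forall>p\<in>S1. \<forall>q\<in>S2. (\<lambda>j. p j + q j) \<in> S3"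
  shows "(\<lambda>j. x j + y j) \<in> conv_hull m S3"
proof -
  obtain P c where P: "finite P" "P \<subseteq> S1" "\<forall>p\<in>P. c p \<ge> 0" "sum c P = 1" "x = (\<lambda>j. \<Sum>p\<in>P. c p * p j)"
    using assms(1) unfolding conv_hull_def by blast
  obtain Q d where Q: "finite Q" "Q \<subseteq> S2" "\<forall>q\<in>Q. d q \<ge> 0" "sum d Q = 1" "y = (\<lambda>j. \<Sum>q\<in>Q. d q * q j)"
    using assms(2) unfolding conv_hull_def by blast
  have "(\<lambda>j. x j + q j) \<in> conv_hull m S3" if q: "q \<in> Q" for q
  proof -
    have "\<forall>p\<in>P. (\<lambda>j. p j + q j) \<in> S3" using P(2) Q(2) q assms(3) by blast
    then have "(\<lambda>j. \<Sum>p\<in>P. c p * (p j + q j)) \<in> conv_hull m S3"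
      using P by (intro conv_hull_convex_comb[where v = "\<lambda>p j. p j + q j"])
        (auto intro!: conv_hull_point)
    moreover have "(\<lambda>j. \<Sum>p\<in>P. c p * (p j + q j)) = (\<lambda>j. x j + q j)"
      using P by (auto simp: algebra_simps sum.distrib sum_distrib_right[symmetric])
    ultimately show ?thesis by simp
  qed
  then have "(\<lambda>j. \<Sum>q\<in>Q. d q * (x j + q j)) \<in> conv_hull m S3"
    using Q by (intro conv_hull_convex_comb[where v = "\<lambda>q j. x j + q j"]) auto
  moreover have "(\<lambda>j. \<Sum>q\<in>Q. d q * (x j + q j)) = (\<lambda>j. x j + y j)"
    using Q by (auto simp: algebra_simps sum.distrib sum_distrib_right[symmetric])
  ultimately show ?thesis by simp
qed

lemma conv_hull_between:
  assumes "(\<lambda>j. x j + s * d j) \<in> conv_hull m S" "(\<lambda>j. x j - t * d j) \<in> conv_hull m S"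
    and "0 < s" "0 < t"
  shows "x \<in> conv_hull m S"
proof -
  define l where "l = t / (s + t)"
  have "(\<lambda>j. l * (x j + s * d j) + (1 - l) * (x j - t * d j)) \<in> conv_hull m S"
    using assms unfolding l_def by (intro conv_hull_segment) auto
  moreover have
    "l * (x j + s * d j) + (1 - l) * (x j - t * d j) = x j + (l * s - (1 - l) * t) * d j" for j
    by (simp add: algebra_simps)
  moreover have "l * s - (1 - l) * t = 0"
    using assms(3,4) unfolding l_def by (simp add: field_simps)
  ultimately show ?thesis by simp
qed

section \<open>Base polyhedra of set functions\<close>

definition greedy_vector :: "('a set \<Rightarrow> real) \<Rightarrow> 'a list \<Rightarrow> 'a \<Rightarrow> real" where
  "greedy_vector f p a = (if a \<in> set p then f (insert a (set (takeWhile (\<lambda>b. b \<noteq> a) p)))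
     - f (set (takeWhile (\<lambda>b. b \<noteq> a) p)) else 0)"

definition greedy_vectors :: "'a set \<Rightarrow> ('a set \<Rightarrow> real) \<Rightarrow> ('a \<Rightarrow> real) set" where
  "greedy_vectors E f = {greedy_vector f p | p. distinct p \<and> set p = E}"

definition contraction :: "('a set \<Rightarrow> real) \<Rightarrow> 'a set \<Rightarrow> 'a set \<Rightarrow> real" where
  "contraction f T = (\<lambda>S. f (S \<union> T) - f T)"

definition base_polyhedron :: "'a set \<Rightarrow> ('a set \<Rightarrow> real) \<Rightarrow> ('a \<Rightarrow> real) set" where
  "base_polyhedron E f =
     {x. (\<forall>j. j \<notin> E \<longrightarrow> x j = 0) \<and> (\<forall>U \<subseteq> E. sum x U \<le> f U) \<and> sum x E = f E}"

lemma greedy_vector_append: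
  assumes "distinct (xs @ ys)"
  shows "greedy_vector f (xs @ ys) a =
    greedy_vector f xs a + greedy_vector (contraction f (set xs)) ys a"
proof (cases "a \<in> set xs")
  case True
  then have "a \<notin> set ys" using assms by auto
  moreover have "takeWhile (\<lambda>b. b \<noteq> a) (xs @ ys) = takeWhile (\<lambda>b. b \<noteq> a) xs"
    using True by (simp add: takeWhile_append1)
  ultimately show ?thesis using True unfolding greedy_vector_def by simp
next
  case False
  then have "takeWhile (\<lambda>b. b \<noteq> a) (xs @ ys) = xs @ takeWhile (\<lambda>b. b \<noteq> a) ys"
    by (intro takeWhile_append2) auto
  then show ?thesis using False unfolding greedy_vector_def contraction_def
    by (simp add: Un_commute insert_commute)
qed

lemma greedy_vector_snoc:
  assumes "distinct (p @ [a])"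
  shows "greedy_vector f (p @ [a]) b =
    (if b = a then f (insert a (set p)) - f (set p) else greedy_vector f p b)"
  using greedy_vector_append[OF assms, of f b] assms
  unfolding greedy_vector_def contraction_def by auto

lemma greedy_vectors_add:
  assumes "p \<in> greedy_vectors T f" "q \<in> greedy_vectors (E - T) (contraction f T)" "T \<subseteq> E"
  shows "(\<lambda>j. p j + q j) \<in> greedy_vectors E f"
proof -
  obtain xs where xs: "p = greedy_vector f xs" "distinct xs" "set xs = T"
    using assms(1) unfolding greedy_vectors_def by blast
  obtain ys where ys: "q = greedy_vector (contraction f T) ys" "distinct ys" "set ys = E - T"
    using assms(2) unfolding greedy_vectors_def by blast
  have "distinct (xs @ ys)" "set (xs @ ys) = E" using xs ys assms(3) by auto
  moreover have "(\<lambda>j. p j + q j) = greedy_vector f (xs @ ys)"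
    using greedy_vector_append[OF \<open>distinct (xs @ ys)\<close>] xs ys by auto
  ultimately show ?thesis unfolding greedy_vectors_def by blast
qed

lemma base_polyhedron_restrict:
  assumes "x \<in> base_polyhedron E f" "T \<subseteq> E" "sum x T = f T"
  shows "(\<lambda>j. if j \<in> T then x j else 0) \<in> base_polyhedron T f"
proof -
  have "sum (\<lambda>j. if j \<in> T then x j else 0) U = sum x U" if "U \<subseteq> T" for U
    using that by (intro sum.cong) auto
  then show ?thesis using assms unfolding base_polyhedron_def by auto
qed

lemma base_polyhedron_contract:
  assumes "x \<in> base_polyhedron E f" "finite E" "T \<subseteq> E" "sum x T = f T"
  shows "(\<lambda>j. if j \<in> E - T then x j else 0) \<in> base_polyhedron (E - T) (contraction f T)"
proof -
  have restrict: "sum (\<lambda>j. if j \<in> E - T then x j else 0) U = sum x U" if "U \<subseteq> E - T" for U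
    using that by (intro sum.cong) auto
  have split: "sum x (U \<union> T) = sum x U + sum x T" if "U \<subseteq> E - T" for U
    using that assms(2,3) finite_subset by (intro sum.union_disjoint) auto
  have bound: "sum x (U \<union> T) \<le> f (U \<union> T)" if "U \<subseteq> E - T" for U
  proof -
    have "U \<union> T \<subseteq> E" using that assms(3) by blast
    then show ?thesis using assms(1) unfolding base_polyhedron_def by blast
  qed
  show ?thesis
    unfolding base_polyhedron_def contraction_def
  proof (intro CollectI conjI allI impI)
    fix U assume U: "U \<subseteq> E - T"
    then show "sum (\<lambda>j. if j \<in> E - T then x j else 0) U \<le> f (U \<union> T) - f T"
      using restrict[OF U] split[OF U] bound[OF U] assms(4) by linarith
  next
    have "(E - T) \<union> T = E" using assms(3) by blast
    then show "sum (\<lambda>j. if j \<in> E - T then x j else 0) (E - T) = f ((E - T) \<union> T) - f T"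
      using restrict[of "E - T"] split[of "E - T"] assms(1,4) unfolding base_polyhedron_def by simp
  qed auto
qed

lemma base_polyhedron_card_le_1:
  assumes "x \<in> base_polyhedron E f" "finite E" "card E \<le> 1" "f {} = 0"
  shows "x \<in> greedy_vectors E f"
proof (cases "E = {}")
  case True
  then have "x = greedy_vector f []"
    using assms(1) unfolding base_polyhedron_def greedy_vector_def by auto
  then show ?thesis using True unfolding greedy_vectors_def by force
next
  case False
  then obtain a where "a \<in> E" by blast
  then have "E = {a}" using assms(2,3) card_le_Suc0_iff_eq[of E] by auto
  then have "x = greedy_vector f [a]"
    using assms(1,4) unfolding base_polyhedron_def greedy_vector_def by auto
  then show ?thesis using \<open>E = {a}\<close> unfolding greedy_vectors_def by force
qed

definition exchange_direction :: "'a \<Rightarrow> 'a \<Rightarrow> 'a \<Rightarrow> real" where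
  "exchange_direction a b j = (if j = a then 1 else 0) - (if j = b then 1 else 0)"

lemma exchange_direction_swap: "exchange_direction b a j = - exchange_direction a b j"
  unfolding exchange_direction_def by simp

lemma sum_exchange_direction:
  "finite V \<Longrightarrow> sum (exchange_direction a b) V = (if a \<in> V then 1 else 0) - (if b \<in> V then 1 else 0)"
  unfolding exchange_direction_def by (simp add: sum_subtractf)

lemma base_polyhedron_shift:
  assumes x: "x \<in> base_polyhedron E f" and "finite E" "a \<in> E" "b \<in> E" "a \<noteq> b"
    and slack: "\<And>U. U \<subseteq> E \<Longrightarrow> a \<in> U \<Longrightarrow> b \<notin> U \<Longrightarrow> sum x U < f U"
  obtains t U where "0 < t" "U \<subseteq> E" "a \<in> U" "b \<notin> U"
    "(\<lambda>j. x j + t * exchange_direction a b j) \<in> base_polyhedron E f"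
    "sum (\<lambda>j. x j + t * exchange_direction a b j) U = f U"
proof -
  define D where "D = {U. U \<subseteq> E \<and> a \<in> U \<and> b \<notin> U}"
  define t where "t = Min ((\<lambda>U. f U - sum x U) ` D)"
  define y where "y = (\<lambda>j. x j + t * exchange_direction a b j)"
  have D: "finite D" "{a} \<in> D" unfolding D_def using assms by auto
  then have "t \<in> (\<lambda>U. f U - sum x U) ` D" unfolding t_def by (intro Min_in) auto
  then obtain U where U: "U \<in> D" "t = f U - sum x U" by blast
  have t_le: "t \<le> f V - sum x V" if "V \<in> D" for V
    unfolding t_def using D that by (intro Min_le) auto
  have "0 < t" using U slack unfolding D_def by auto
  have sum_y: "sum y V = sum x V + t * ((if a \<in> V then 1 else 0) - (if b \<in> V then 1 else 0))"
    if "V \<subseteq> E" for V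
  proof -
    have "finite V" using that \<open>finite E\<close> finite_subset by blast
    then show ?thesis
      unfolding y_def by (simp add: sum.distrib sum_distrib_left[symmetric] sum_exchange_direction)
  qed
  have "y \<in> base_polyhedron E f"
    unfolding base_polyhedron_def
  proof (intro CollectI conjI allI impI)
    fix j assume "j \<notin> E"
    then show "y j = 0"
      using x assms(3,4) unfolding y_def exchange_direction_def base_polyhedron_def by auto
  next
    fix V assume V: "V \<subseteq> E"
    show "sum y V \<le> f V"
    proof (cases "a \<in> V \<and> b \<notin> V")
      case True
      then show ?thesis using t_le[of V] sum_y[OF V] V unfolding D_def by auto
    next
      case False
      then show ?thesis using sum_y[OF V] x V \<open>0 < t\<close> unfolding base_polyhedron_def by auto
    qed
  next
    show "sum y E = f E" using sum_y[of E] x assms(3,4) unfolding base_polyhedron_def by auto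
  qed
  moreover have "sum y U = f U" using U sum_y unfolding D_def by auto
  ultimately show ?thesis using that \<open>0 < t\<close> U(1) unfolding D_def y_def by auto
qed

lemma conv_hull_greedy_vectors_split:
  assumes "x \<in> base_polyhedron E f" "T \<subseteq> E"
    and "(\<lambda>j. if j \<in> T then x j else 0) \<in> conv_hull m (greedy_vectors T f)"
    and "(\<lambda>j. if j \<in> E - T then x j else 0)
      \<in> conv_hull m (greedy_vectors (E - T) (contraction f T))"
  shows "x \<in> conv_hull m (greedy_vectors E f)"
proof -
  have "(\<lambda>j. (if j \<in> T then x j else 0) + (if j \<in> E - T then x j else 0))
      \<in> conv_hull m (greedy_vectors E f)"
    using assms(2-4) greedy_vectors_add by (intro conv_hull_Minkowski_sum) auto
  moreover have "(\<lambda>j. (if j \<in> T then x j else 0) + (if j \<in> E - T then x j else 0)) = x"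
    using assms(1,2) unfolding base_polyhedron_def by auto
  ultimately show ?thesis by simp
qed

text \<open>If no set separating a from b is tight, x can be moved both ways along e_a - e_b until
  one becomes tight, and x lies between the two endpoints.\<close>
lemma base_polyhedron_between_tight:
  assumes x: "x \<in> base_polyhedron E f" and "finite E" "a \<in> E" "b \<in> E" "a \<noteq> b"
    and slack: "\<And>U. U \<subseteq> E \<Longrightarrow> U \<noteq> {} \<Longrightarrow> U \<noteq> E \<Longrightarrow> sum x U < f U"
    and tight: "\<And>y T. y \<in> base_polyhedron E f \<Longrightarrow> T \<noteq> {} \<Longrightarrow> T \<subset> E \<Longrightarrow> sum y T = f T \<Longrightarrow>
      y \<in> conv_hull m S"
  shows "x \<in> conv_hull m S"
proof -
  have ab: "a \<in> E" "b \<in> E" "a \<noteq> b" by fact+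
  obtain s U where s: "0 < s" "U \<subseteq> E" "a \<in> U" "b \<notin> U"
    "(\<lambda>j. x j + s * exchange_direction a b j) \<in> base_polyhedron E f"
    "sum (\<lambda>j. x j + s * exchange_direction a b j) U = f U"
    by (rule base_polyhedron_shift[OF x \<open>finite E\<close> ab]) (use slack ab in blast)
  have left: "(\<lambda>j. x j + s * exchange_direction a b j) \<in> conv_hull m S"
    using s ab by (intro tight[where T = U]) auto
  obtain t V where t: "0 < t" "V \<subseteq> E" "b \<in> V" "a \<notin> V"
    "(\<lambda>j. x j + t * exchange_direction b a j) \<in> base_polyhedron E f"
    "sum (\<lambda>j. x j + t * exchange_direction b a j) V = f V"
    by (rule base_polyhedron_shift[OF x \<open>finite E\<close> ab(2,1) ab(3)[symmetric]])
      (use slack ab in blast)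
  have "(\<lambda>j. x j + t * exchange_direction b a j) \<in> conv_hull m S"
    using t ab by (intro tight[where T = V]) auto
  then have right: "(\<lambda>j. x j - t * exchange_direction a b j) \<in> conv_hull m S"
    by (simp add: exchange_direction_swap[of a b])
  show ?thesis using conv_hull_between[OF left right s(1) t(1)] .
qed

text \<open>Induction on |E|: a tight nonempty proper subset T splits x into a point of the base
  polyhedron of f on T and one of the contraction of f by T.\<close>
lemma base_polyhedron_subset_conv_hull_greedy_vectors:
  assumes "finite E" "f {} = 0" "x \<in> base_polyhedron E f"
  shows "x \<in> conv_hull m (greedy_vectors E f)"
  using assms
proof (induction "card E" arbitrary: E f x rule: less_induct)
  case less
  have tight: "y \<in> conv_hull m (greedy_vectors E f)"
    if y: "y \<in> base_polyhedron E f" and T: "T \<noteq> {}" "T \<subset> E" "sum y T = f T" for y T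
  proof (rule conv_hull_greedy_vectors_split[OF y])
    have "finite T" using T less.prems(1) finite_subset by blast
    have "card T < card E" "card (E - T) < card E"
      using T less.prems(1) by (auto intro!: psubset_card_mono)
    show "(\<lambda>j. if j \<in> T then y j else 0) \<in> conv_hull m (greedy_vectors T f)"
      by (rule less.hyps) (use \<open>card T < card E\<close> \<open>finite T\<close> less.prems(2)
        base_polyhedron_restrict[OF y _ T(3)] T(2) in auto)
    show "(\<lambda>j. if j \<in> E - T then y j else 0)
      \<in> conv_hull m (greedy_vectors (E - T) (contraction f T))"
      by (rule less.hyps) (use \<open>card (E - T) < card E\<close> less.prems(1)
        base_polyhedron_contract[OF y less.prems(1) _ T(3)] T(2) in \<open>auto simp: contraction_def\<close>)
  qed (use T in blast)
  show ?case
  proof (cases "\<exists>T. T \<noteq> {} \<and> T \<subset> E \<and> sum x T = f T")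
    case True
    then show ?thesis using tight less.prems(3) by blast
  next
    case no_tight: False
    show ?thesis
    proof (cases "card E \<le> 1")
      case True
      then show ?thesis using base_polyhedron_card_le_1 conv_hull_point less.prems by blast
    next
      case False
      then obtain a b where ab: "a \<in> E" "b \<in> E" "a \<noteq> b"
        using less.prems(1) card_le_Suc0_iff_eq[of E] by auto
      have slack: "sum x U < f U" if "U \<subseteq> E" "U \<noteq> {}" "U \<noteq> E" for U
      proof -
        have "sum x U \<noteq> f U" using no_tight that by blast
        moreover have "sum x U \<le> f U" using that(1) less.prems(3) unfolding base_polyhedron_def
          by blast
        ultimately show ?thesis by simp
      qed
      show ?thesis by (rule base_polyhedron_between_tight[OF less.prems(3,1) ab slack tight])
    qed
  qed
qed

section \<open>The column matroid of a matrix\<close>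

lemma bij_betw_pick: "bij_betw (pick C) {..<card {a. a < N \<and> a \<in> C}} {a. a < N \<and> a \<in> C}"
proof -
  define D where "D = {a. a < N \<and> a \<in> C}"
  have "finite D" unfolding D_def by auto
  have pick_defined: "j < card C \<or> infinite C" if "j < card D" for j
  proof (cases "finite C")
    case True
    then have "card D \<le> card C" unfolding D_def by (intro card_mono) auto
    then show ?thesis using that by auto
  qed auto
  have "inj_on (pick C) {..<card D}"
    unfolding inj_on_def by (metis pick_defined lessThan_iff nat_neq_iff pick_mono)
  moreover have "pick C ` {..<card D} \<subseteq> D"
    using pick_defined pick_in_set pick_le unfolding D_def by auto
  moreover have "D \<subseteq> pick C ` {..<card D}"
  proof
    fix i assume i: "i \<in> D"
    have "{a \<in> C. a < i} \<subset> D" using i unfolding D_def by auto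
    then have "card {a \<in> C. a < i} < card D" by (rule psubset_card_mono[OF \<open>finite D\<close>])
    moreover have "pick C (card {a \<in> C. a < i}) = i"
      using i unfolding D_def by (intro pick_card_in_set) auto
    ultimately show "i \<in> pick C ` {..<card D}" by force
  qed
  ultimately show ?thesis unfolding bij_betw_def D_def by blast
qed

lemma col_submatrix_UNIV:
  assumes "j < card {a. a < dim_col A \<and> a \<in> C}"
  shows "col (submatrix A UNIV C) j = col A (pick C j)"
proof (rule eq_vecI)
  show "dim_vec (col (submatrix A UNIV C) j) = dim_vec (col A (pick C j))"
    by (simp add: dim_submatrix)
  fix i assume "i < dim_vec (col A (pick C j))"
  then have i: "i < dim_row A" by simp
  have "col (submatrix A UNIV C) j $ i = submatrix A UNIV C $$ (i, j)"
    using i assms by (simp add: dim_submatrix)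
  also have "\<dots> = A $$ (i, pick C j)"
    using submatrix_index[of i A UNIV j C] i assms by (simp add: pick_UNIV)
  also have "\<dots> = col A (pick C j) $ i"
    using i pick_le[OF assms] by simp
  finally show "col (submatrix A UNIV C) j $ i = col A (pick C j) $ i" .
qed

lemma cols_submatrix_UNIV:
  "cols (submatrix A UNIV C) = map (\<lambda>j. col A (pick C j)) [0..<card {a. a < dim_col A \<and> a \<in> C}]"
  by (rule nth_equalityI) (auto simp: dim_submatrix col_submatrix_UNIV)

lemma set_cols_submatrix_UNIV:
  "set (cols (submatrix A UNIV C)) = col A ` {a. a < dim_col A \<and> a \<in> C}"
proof -
  have "set (cols (submatrix A UNIV C)) = col A ` pick C ` {..<card {a. a < dim_col A \<and> a \<in> C}}"
    unfolding cols_submatrix_UNIV by (auto simp: atLeast0LessThan)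
  then show ?thesis using bij_betw_pick[of C "dim_col A"] unfolding bij_betw_def by simp
qed

lemma distinct_cols_submatrix_UNIV_iff:
  "distinct (cols (submatrix A UNIV C)) \<longleftrightarrow> inj_on (col A) {a. a < dim_col A \<and> a \<in> C}"
proof -
  have bij: "bij_betw (pick C) {..<card {a. a < dim_col A \<and> a \<in> C}} {a. a < dim_col A \<and> a \<in> C}"
    by (rule bij_betw_pick)
  have "distinct (cols (submatrix A UNIV C))
      \<longleftrightarrow> inj_on (col A \<circ> pick C) {..<card {a. a < dim_col A \<and> a \<in> C}}"
    unfolding cols_submatrix_UNIV distinct_map by (simp add: atLeast0LessThan comp_def)
  also have "\<dots> \<longleftrightarrow> inj_on (col A) (pick C ` {..<card {a. a < dim_col A \<and> a \<in> C}})"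
    using bij unfolding bij_betw_def by (intro comp_inj_on_iff[symmetric]) simp
  also have "pick C ` {..<card {a. a < dim_col A \<and> a \<in> C}} = {a. a < dim_col A \<and> a \<in> C}"
    using bij unfolding bij_betw_def by simp
  finally show ?thesis .
qed

context vec_space
begin

lemma lin_indpt_extend_dim_span:
  assumes "finite S" "S \<subseteq> carrier_vec n" "U \<subseteq> S" "lin_indpt U"
  obtains U' where "U \<subseteq> U'" "U' \<subseteq> S" "lin_indpt U'"
    "card U' = vectorspace.dim class_ring (span_vs S)"
proof -
  obtain U' where U': "finite U'" "maximal U' (\<lambda>T. T \<subseteq> S \<and> lin_indpt T)" "U \<subseteq> U'"
    using maximal_exists_superset[of S "\<lambda>T. T \<subseteq> S \<and> lin_indpt T" U] assms by blast
  then show ?thesis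
    using that dim_span[OF assms(2,1) U'(2)] unfolding maximal_def by metis
qed

lemma card_le_dim_span:
  assumes "finite S" "S \<subseteq> carrier_vec n" "U \<subseteq> S" "lin_indpt U"
  shows "card U \<le> vectorspace.dim class_ring (span_vs S)"
proof -
  obtain U' where "U \<subseteq> U'" "U' \<subseteq> S" "card U' = vectorspace.dim class_ring (span_vs S)"
    using lin_indpt_extend_dim_span[OF assms] by metis
  then show ?thesis using assms(1) by (metis card_mono finite_subset)
qed

definition indep_cols :: "'a mat \<Rightarrow> nat set \<Rightarrow> bool" where
  "indep_cols A J \<longleftrightarrow> J \<subseteq> {..<dim_col A} \<and> inj_on (col A) J \<and> lin_indpt (col A ` J)"

definition rank_cols :: "'a mat \<Rightarrow> nat set \<Rightarrow> nat" where
  "rank_cols A C = vectorspace.dim class_ring (span_vs (col A ` (C \<inter> {..<dim_col A})))"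

lemma rank_submatrix_UNIV: "rank (submatrix A UNIV C) = rank_cols A C"
proof -
  have "{a. a < dim_col A \<and> a \<in> C} = C \<inter> {..<dim_col A}" by auto
  then show ?thesis unfolding rank_def rank_cols_def set_cols_submatrix_UNIV by simp
qed

lemma rank_eq_rank_cols: "rank A = rank_cols A {..<dim_col A}"
proof -
  have "set (cols A) = col A ` {..<dim_col A}" unfolding cols_def by (simp add: atLeast0LessThan)
  then show ?thesis unfolding rank_def rank_cols_def by simp
qed

lemma rank_cols_empty: "rank_cols A {} = 0"
  unfolding rank_cols_def by (simp add: dim_zero_vs)

lemma indep_cols_empty: "indep_cols A {}"
  unfolding indep_cols_def by (simp add: lin_dep_def)

lemma indep_cols_subset:
  assumes "indep_cols A J" "J' \<subseteq> J"
  shows "indep_cols A J'"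
  using assms subset_li_is_li[of "col A ` J" "col A ` J'"] inj_on_subset[of "col A" J J']
    image_mono[OF assms(2), of "col A"]
  unfolding indep_cols_def by blast

lemma indep_cols_card_le_rank_cols:
  assumes "dim_row A = n" "indep_cols A J" "J \<subseteq> C"
  shows "card J \<le> rank_cols A C"
proof -
  have "col A ` J \<subseteq> col A ` (C \<inter> {..<dim_col A})" using assms(2,3) unfolding indep_cols_def by blast
  moreover have "col A ` (C \<inter> {..<dim_col A}) \<subseteq> carrier_vec n" using assms(1) by auto
  ultimately have "card (col A ` J) \<le> rank_cols A C"
    using assms(2) unfolding rank_cols_def indep_cols_def by (intro card_le_dim_span) auto
  then show ?thesis using assms(2) unfolding indep_cols_def by (simp add: card_image)
qed

lemma indep_cols_basis_insert_lin_dep: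
  assumes "dim_row A = n" "indep_cols A J" "J \<subseteq> C" "card J = rank_cols A C"
    and "j \<in> C" "j < dim_col A" "col A j \<notin> col A ` J"
  shows "lin_dep (insert (col A j) (col A ` J))"
proof (rule ccontr)
  assume indpt: "lin_indpt (insert (col A j) (col A ` J))"
  have "insert (col A j) (col A ` J) \<subseteq> col A ` (C \<inter> {..<dim_col A})"
    using assms(2,3,5,6) unfolding indep_cols_def by blast
  then have "card (insert (col A j) (col A ` J)) \<le> rank_cols A C"
    unfolding rank_cols_def using assms(1) indpt by (intro card_le_dim_span) auto
  moreover have "finite J" using assms(2) finite_subset unfolding indep_cols_def by blast
  then have "card (insert (col A j) (col A ` J)) = card J + 1"
    using assms(2,7) unfolding indep_cols_def by (simp add: card_image)
  ultimately show False using assms(4) by simp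
qed

lemma indep_cols_augment:
  assumes "dim_row A = n" "indep_cols A J" "J \<subseteq> C1" "card J = rank_cols A C1" "C1 \<subseteq> C2"
  obtains New where "New \<subseteq> C2 - C1" "indep_cols A (J \<union> New)" "card (J \<union> New) = rank_cols A C2"
proof -
  define N where "N = dim_col A"
  have J: "J \<subseteq> {..<N}" "inj_on (col A) J" "lin_indpt (col A ` J)"
    using assms(2) unfolding indep_cols_def N_def by auto
  have car: "col A ` X \<subseteq> carrier_vec n" for X using assms(1) by auto
  have "col A ` J \<subseteq> col A ` (C2 \<inter> {..<N})" using J(1) assms(3,5) by blast
  from lin_indpt_extend_dim_span[OF _ car this J(3)]
  obtain U' where U': "col A ` J \<subseteq> U'" "U' \<subseteq> col A ` (C2 \<inter> {..<N})" "lin_indpt U'"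
    "card U' = rank_cols A C2"
    unfolding rank_cols_def N_def by auto
  have "finite U'" using U'(2) finite_subset by blast
  have "U' - col A ` J \<subseteq> col A ` ((C2 - C1) \<inter> {..<N})"
  proof
    fix u assume u: "u \<in> U' - col A ` J"
    then obtain j where j: "j \<in> C2 \<inter> {..<N}" "u = col A j" using U'(2) by blast
    have "lin_indpt (insert u (col A ` J))"
      using U' u subset_li_is_li[of U' "insert u (col A ` J)"] by auto
    then have "j \<notin> C1"
      using indep_cols_basis_insert_lin_dep[OF assms(1-4)] j u N_def by blast
    then show "u \<in> col A ` ((C2 - C1) \<inter> {..<N})" using j by blast
  qed
  then obtain New where New: "New \<subseteq> (C2 - C1) \<inter> {..<N}" "inj_on (col A) New"
    "U' - col A ` J = col A ` New"
    by (auto simp: subset_image_inj)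
  have image: "col A ` (J \<union> New) = U'" using New(3) U'(1) by blast
  have "inj_on (col A) (J \<union> New)"
    unfolding inj_on_Un using J(2) New(2,3) by blast
  then have "card (J \<union> New) = card U'" using image card_image by metis
  moreover have "indep_cols A (J \<union> New)"
    unfolding indep_cols_def N_def[symmetric]
      using image \<open>inj_on (col A) (J \<union> New)\<close> U'(3) J(1) New(1) by auto
  moreover have "New \<subseteq> C2 - C1" using New(1) by blast
  ultimately show ?thesis using U'(4) by (intro that) auto
qed

lemma det_submatrix_neq_0_iff_indep_cols:
  assumes "A \<in> carrier_mat n N" "J \<subseteq> {..<N}" "card J = n"
  shows "det (submatrix A UNIV J) \<noteq> 0 \<longleftrightarrow> indep_cols A J"
proof -
  define M where "M = submatrix A UNIV J"
  have J: "{a. a < dim_col A \<and> a \<in> J} = J" using assms by auto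
  have dims: "dim_row A = n" "dim_col A = N" using assms(1) by auto
  have "{j. j < N \<and> j \<in> J} = J" using assms(2) by auto
  then have M: "M \<in> carrier_mat n n"
    unfolding M_def carrier_mat_def by (simp add: dim_submatrix dims assms(3))
  have set_M: "set (cols M) = col A ` J" unfolding M_def set_cols_submatrix_UNIV J ..
  have distinct_M: "distinct (cols M) \<longleftrightarrow> inj_on (col A) J"
    unfolding M_def distinct_cols_submatrix_UNIV_iff J ..
  have "det M \<noteq> 0 \<longleftrightarrow> rank M = n" by (rule det_rank_iff[OF M])
  also have "\<dots> \<longleftrightarrow> distinct (cols M) \<and> lin_indpt (set (cols M))"
  proof
    assume "rank M = n"
    moreover from this have "distinct (cols M)" using non_distinct_low_rank[OF M] by auto
    ultimately show "distinct (cols M) \<and> lin_indpt (set (cols M))" using full_rank_lin_indpt[OF M]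
      by blast
  qed (use lin_indpt_full_rank[OF M] in blast)
  also have "\<dots> \<longleftrightarrow> indep_cols A J"
    unfolding set_M distinct_M indep_cols_def using assms by auto
  finally show ?thesis unfolding M_def .
qed

end

section \<open>Column blocks and the orbit polytope\<close>

definition col_block :: "nat \<Rightarrow> nat set \<Rightarrow> nat set" where
  "col_block r S = {col_idx r i j | i j. i < r \<and> j \<in> S}"

lemma col_idx_inj:
  assumes "i < r" "i' < r" "col_idx r i j = col_idx r i' j'"
  shows "i = i' \<and> j = j'"
proof -
  have "j = (r * j + i) div r" "j' = (r * j' + i') div r" using assms(1,2) by simp_all
  then have "j = j'" using assms(3) unfolding col_idx_def by metis
  then show ?thesis using assms(3) unfolding col_idx_def by simp
qed

lemma col_block_empty [simp]: "col_block r {} = {}"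
  unfolding col_block_def by simp

lemma col_block_insert: "col_block r (insert a S) = col_block r {a} \<union> col_block r S"
  unfolding col_block_def by blast

lemma col_block_disjoint: "a \<notin> S \<Longrightarrow> col_block r {a} \<inter> col_block r S = {}"
  unfolding col_block_def using col_idx_inj by blast

lemma finite_col_block: "finite S \<Longrightarrow> finite (col_block r S)"
proof -
  assume "finite S"
  have "col_block r S = (\<lambda>(i, j). col_idx r i j) ` ({..<r} \<times> S)" unfolding col_block_def by auto
  then show ?thesis using \<open>finite S\<close> by simp
qed

lemma col_block_lessThan: "0 < r \<Longrightarrow> col_block r {..<n} = {..<r * n}"
proof (intro equalityI subsetI)
  fix m assume "m \<in> col_block r {..<n}"
  then obtain i j where "m = r * j + i" "i < r" "j < n" unfolding col_block_def col_idx_def by blast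
  moreover have "r * j + r \<le> r * n" using \<open>j < n\<close>
    by (metis mult_Suc_right mult_le_mono2 Suc_leI add.commute)
  ultimately show "m \<in> {..<r * n}" by simp
next
  fix m assume "0 < r" "m \<in> {..<r * n}"
  then have "m = col_idx r (m mod r) (m div r)" "m mod r < r" "m div r < n"
    by (simp_all add: col_idx_def div_less_iff_less_mult mult.commute)
  then show "m \<in> col_block r {..<n}" unfolding col_block_def by blast
qed

lemma card_Int_col_block:
  "finite U \<Longrightarrow> card (J \<inter> col_block r U) = (\<Sum>a\<in>U. card (J \<inter> col_block r {a}))"
proof (induction U rule: finite_induct)
  case (insert a U)
  have "J \<inter> col_block r (insert a U) = (J \<inter> col_block r {a}) \<union> (J \<inter> col_block r U)"
    using col_block_insert by blast
  moreover have "(J \<inter> col_block r {a}) \<inter> (J \<inter> col_block r U) = {}"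
    using col_block_disjoint[OF insert(2)] by blast
  moreover have "finite (J \<inter> col_block r {a})" "finite (J \<inter> col_block r U)"
    using finite_col_block insert(1) by auto
  ultimately show ?case using insert by (simp add: card_Un_disjoint)
qed simp

lemma torus_weight_eq_card:
  assumes "j < n"
  shows "torus_weight r n J j = real (card (J \<inter> col_block r {j}))"
proof -
  have "J \<inter> col_block r {j} = (\<lambda>i. col_idx r i j) ` {i. i < r \<and> col_idx r i j \<in> J}"
    unfolding col_block_def by auto
  moreover have "inj_on (\<lambda>i. col_idx r i j) {i. i < r \<and> col_idx r i j \<in> J}"
    unfolding inj_on_def col_idx_def by auto
  ultimately show ?thesis using assms unfolding torus_weight_def by (simp add: card_image)
qed

lemma sum_torus_weight:
  assumes "U \<subseteq> {..<n}"
  shows "sum (torus_weight r n J) U = real (card (J \<inter> col_block r U))"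
proof -
  have "finite U" using assms finite_subset by blast
  have "sum (torus_weight r n J) U = (\<Sum>a\<in>U. real (card (J \<inter> col_block r {a})))"
    using assms by (intro sum.cong) (auto simp: torus_weight_eq_card)
  then show ?thesis using card_Int_col_block[OF \<open>finite U\<close>] by simp
qed

lemma card_Int_col_block_Un:
  assumes "J \<subseteq> col_block r S" "New \<subseteq> col_block r {a}" "a \<notin> S"
  shows "card ((J \<union> New) \<inter> col_block r {b}) =
    (if b = a then card New else card (J \<inter> col_block r {b}))"
proof (cases "b = a")
  case True
  then have "(J \<union> New) \<inter> col_block r {b} = New"
    using assms col_block_disjoint[of a S r] by blast
  then show ?thesis using True by simp
next
  case False
  then have "(J \<union> New) \<inter> col_block r {b} = J \<inter> col_block r {b}"
    using assms(2) col_block_disjoint[of a "{b}" r] by blast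
  then show ?thesis using False by simp
qed

lemma pm_rank_eq_rank_cols: "pm_rank r k A S = vec_space.rank_cols k A (col_block r S)"
  unfolding pm_rank_def col_block_def[symmetric] by (rule vec_space.rank_submatrix_UNIV)

context vec_space
begin

lemma greedy_indep_cols:
  assumes "dim_row A = n" "distinct p"
  shows "\<exists>J. indep_cols A J \<and> J \<subseteq> col_block r (set p) \<and> card J = rank_cols A (col_block r (set p)) \<and>
    (\<forall>a\<in>set p. real (card (J \<inter> col_block r {a})) =
        greedy_vector (\<lambda>S. real (rank_cols A (col_block r S))) p a)"
  using assms(2)
proof (induction p rule: rev_induct)
  case Nil
  show ?case by (intro exI[of _ "{}"]) (simp add: indep_cols_empty rank_cols_empty)
next
  case (snoc a p)
  let ?f = "\<lambda>S. real (rank_cols A (col_block r S))"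
  have a: "a \<notin> set p" "distinct p" using snoc.prems by auto
  obtain J where J: "indep_cols A J" "J \<subseteq> col_block r (set p)"
      "card J = rank_cols A (col_block r (set p))"
    and weights: "\<forall>b\<in>set p. real (card (J \<inter> col_block r {b})) = greedy_vector ?f p b"
    using snoc.IH[OF a(2)] by blast
  have blocks: "col_block r (set (p @ [a])) = col_block r {a} \<union> col_block r (set p)"
    using col_block_insert[of r a "set p"] by simp
  then have "col_block r (set p) \<subseteq> col_block r (set (p @ [a]))" by blast
  from indep_cols_augment[OF assms(1) J(1,2,3) this]
  obtain New where New: "New \<subseteq> col_block r (set (p @ [a])) - col_block r (set p)"
    "indep_cols A (J \<union> New)" "card (J \<union> New) = rank_cols A (col_block r (set (p @ [a])))" .
  have New_a: "New \<subseteq> col_block r {a}" using New(1) blocks by blast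
  have "finite J" "finite New" using New(1) J(2) finite_col_block finite_subset by blast+
  then have "card (J \<union> New) = card J + card New" using New(1) J(2) by (intro card_Un_disjoint) auto
  then have card_New: "real (card New) = ?f (insert a (set p)) - ?f (set p)"
    using New(3) J(3) by simp
  show ?case
  proof (intro exI[of _ "J \<union> New"] conjI ballI)
    fix b assume "b \<in> set (p @ [a])"
    then show "real (card ((J \<union> New) \<inter> col_block r {b})) = greedy_vector ?f (p @ [a]) b"
      using card_Int_col_block_Un[OF J(2) New_a a(1)] greedy_vector_snoc[OF snoc.prems]
        weights card_New
      by auto
  qed (use New J(2) blocks in auto)
qed

end

lemma pm_rank_empty: "pm_rank r k A {} = 0"
proof -
  interpret vec_space "TYPE(complex)" k .
  show ?thesis by (simp add: pm_rank_eq_rank_cols rank_cols_empty)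
qed

lemma pm_rank_lessThan:
  assumes "0 < r" "A \<in> carrier_mat k (r * n)"
  shows "pm_rank r k A {..<n} = vec_space.rank k A"
proof -
  interpret vec_space "TYPE(complex)" k .
  show ?thesis
    using assms by (simp add: pm_rank_eq_rank_cols col_block_lessThan rank_eq_rank_cols)
qed

lemma orbit_exponents_subset_base_polytope:
  assumes "0 < r" "A \<in> carrier_mat k (r * n)" "vec_space.rank k A = k"
  shows "orbit_exponents r n k A \<subseteq> base_polytope n (pm_rank r k A)"
proof
  interpret vec_space "TYPE(complex)" k .
  fix x assume "x \<in> orbit_exponents r n k A"
  then obtain J where J: "x = torus_weight r n J" "J \<subseteq> {..<r * n}" "card J = k" "pluecker A J \<noteq> 0"
    unfolding orbit_exponents_def by blast
  have indep: "indep_cols A J"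
    using det_submatrix_neq_0_iff_indep_cols[OF assms(2) J(2,3)] J(4) unfolding pluecker_def
      by blast
  show "x \<in> base_polytope n (pm_rank r k A)"
    unfolding base_polytope_def
  proof (intro CollectI conjI allI impI)
    fix U assume U: "U \<subseteq> {..<n}"
    have "card (J \<inter> col_block r U) \<le> rank_cols A (col_block r U)"
      using assms(2) indep_cols_subset[OF indep] by (intro indep_cols_card_le_rank_cols) auto
    then show "(\<Sum>j\<in>U. x j) \<le> real (pm_rank r k A U)"
      using sum_torus_weight[OF U] J(1) by (simp add: pm_rank_eq_rank_cols)
  next
    have "J \<inter> col_block r {..<n} = J" using J(2) col_block_lessThan[OF assms(1)] by blast
    then show "(\<Sum>j<n. x j) = real (pm_rank r k A {..<n})"
      using sum_torus_weight[of "{..<n}" n r J] J(1,3) pm_rank_lessThan[OF assms(1,2)] assms(3)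
        by simp
  qed (use J(1) in \<open>auto simp: torus_weight_def\<close>)
qed

lemma greedy_vectors_subset_orbit_exponents:
  assumes "0 < r" "A \<in> carrier_mat k (r * n)" "vec_space.rank k A = k"
  shows "greedy_vectors {..<n} (\<lambda>S. real (pm_rank r k A S)) \<subseteq> orbit_exponents r n k A"
proof
  interpret vec_space "TYPE(complex)" k .
  fix q assume "q \<in> greedy_vectors {..<n} (\<lambda>S. real (pm_rank r k A S))"
  then obtain p where p: "q = greedy_vector (\<lambda>S. real (pm_rank r k A S)) p"
      "distinct p" "set p = {..<n}"
    unfolding greedy_vectors_def by blast
  obtain J where J: "indep_cols A J" "J \<subseteq> col_block r {..<n}" "card J = pm_rank r k A {..<n}"
    and weights: "\<forall>a<n. real (card (J \<inter> col_block r {a})) = q a"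
    using greedy_indep_cols[of A p r] assms(2) p by (auto simp: pm_rank_eq_rank_cols)
  have "J \<subseteq> {..<r * n}" "card J = k"
    using J(2,3) col_block_lessThan[OF assms(1)] pm_rank_lessThan[OF assms(1,2)] assms(3) by auto
  moreover have "pluecker A J \<noteq> 0"
    using det_submatrix_neq_0_iff_indep_cols[OF assms(2) calculation] J(1) unfolding pluecker_def
      by blast
  moreover have "q = torus_weight r n J"
  proof
    fix a show "q a = torus_weight r n J a"
      using weights torus_weight_eq_card[of a n r J] p(1,3)
      by (cases "a < n") (auto simp: greedy_vector_def torus_weight_def)
  qed
  ultimately show "q \<in> orbit_exponents r n k A" unfolding orbit_exponents_def by blast
qed

lemma conv_hull_subset_base_polytope:
  assumes "S \<subseteq> base_polytope n rk"
  shows "conv_hull m S \<subseteq> base_polytope n rk"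
proof
  fix x assume "x \<in> conv_hull m S"
  then obtain P c where P: "finite P" "P \<subseteq> S" "\<forall>p\<in>P. c p \<ge> 0" "sum c P = 1"
    and x: "x = (\<lambda>j. \<Sum>p\<in>P. c p * p j)"
    unfolding conv_hull_def by blast
  have p: "p \<in> base_polytope n rk" if "p \<in> P" for p using that P(2) assms by blast
  have sum_x: "sum x U = (\<Sum>p\<in>P. c p * sum p U)" for U
    unfolding x by (simp add: sum.swap[of _ U] sum_distrib_left)
  show "x \<in> base_polytope n rk"
    unfolding base_polytope_def
  proof (intro CollectI conjI allI impI)
    fix U assume U: "U \<subseteq> {..<n}"
    have "(\<Sum>p\<in>P. c p * sum p U) \<le> (\<Sum>p\<in>P. c p * real (rk U))"
      using p U P(3) unfolding base_polytope_def by (intro sum_mono mult_left_mono) auto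
    then show "sum x U \<le> real (rk U)" using sum_x P(4) by (simp add: sum_distrib_right[symmetric])
  next
    have "(\<Sum>p\<in>P. c p * sum p {..<n}) = (\<Sum>p\<in>P. c p * real (rk {..<n}))"
      using p unfolding base_polytope_def by (intro sum.cong) auto
    then show "sum x {..<n} = real (rk {..<n})" using sum_x P(4)
      by (simp add: sum_distrib_right[symmetric])
  qed (use p P(3) in \<open>auto simp: x base_polytope_def intro!: sum_nonneg\<close>)
qed

lemma base_polytope_subset_base_polyhedron:
  "base_polytope n rk \<subseteq> base_polyhedron {..<n} (\<lambda>S. real (rk S))"
  unfolding base_polytope_def base_polyhedron_def by auto

lemma orbit_polytope_eq_base_polytope:
  assumes "0 < r" "A \<in> carrier_mat k (r * n)" "vec_space.rank k A = k"
  shows "orbit_polytope r n k A = base_polytope n (pm_rank r k A)"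
proof
  show "orbit_polytope r n k A \<subseteq> base_polytope n (pm_rank r k A)"
    unfolding orbit_polytope_def
    by (rule conv_hull_subset_base_polytope[OF orbit_exponents_subset_base_polytope[OF assms]])
  show "base_polytope n (pm_rank r k A) \<subseteq> orbit_polytope r n k A"
  proof
    fix x assume "x \<in> base_polytope n (pm_rank r k A)"
    then have "x \<in> conv_hull n (greedy_vectors {..<n} (\<lambda>S. real (pm_rank r k A S)))"
      using base_polytope_subset_base_polyhedron pm_rank_empty
      by (intro base_polyhedron_subset_conv_hull_greedy_vectors) auto
    then show "x \<in> orbit_polytope r n k A"
      using conv_hull_mono[OF greedy_vectors_subset_orbit_exponents[OF assms]]
      unfolding orbit_polytope_def by blast
  qed
qed

lemma lattice_iso_refl:
  assumes "\<forall>x\<in>P. \<forall>j. n \<le> j \<longrightarrow> x j = 0"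
  shows "lattice_iso n P P"
proof -
  define I :: "nat \<Rightarrow> nat \<Rightarrow> int" where "I i j = (if i = j then 1 else 0)" for i j
  have I_inverse: "(\<Sum>j<n. I i j * I j l) = (if i = l then 1 else 0)" if "i < n" for i l
    using that unfolding I_def by (simp add: if_distrib sum.delta cong: if_cong)
  have "(\<lambda>i. if i < n then (\<Sum>j<n. of_int (I i j) * x j) + of_int ((\<lambda>_. 0::int) i) else 0) = x"
    if "x \<in> P" for x
  proof
    fix i
    have "(\<Sum>j<n. of_int (I i j) * x j) = (\<Sum>j<n. if j = i then x i else 0)"
      by (intro sum.cong) (auto simp: I_def)
    also have "\<dots> = (if i < n then x i else 0)" by simp
    finally show
      "(if i < n then (\<Sum>j<n. of_int (I i j) * x j) + of_int ((\<lambda>_. 0::int) i) else 0) = x i"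
      using assms that by auto
  qed
  then have image:
    "(\<lambda>x i. if i < n then (\<Sum>j<n. of_int (I i j) * x j) + of_int ((\<lambda>_. 0::int) i) else 0) ` P = P"
    by (auto simp: image_iff)
  show ?thesis
    unfolding lattice_iso_def
    by (rule exI[of _ I], rule exI[of _ I], rule exI[of _ "\<lambda>_. 0"]) (use I_inverse image in auto)
qed

theorem theorem7p4:
  fixes r n k :: nat and A :: "complex mat"
  assumes "0 < r" and "0 < n" and "0 < k"
    and "A \<in> carrier_mat k (r * n)"
    and "vec_space.rank k A = k"
  shows "lattice_iso n (orbit_polytope r n k A) (base_polytope n (pm_rank r k A))"
proof -
  have "\<forall>x\<in>base_polytope n (pm_rank r k A). \<forall>j. n \<le> j \<longrightarrow> x j = 0"
    unfolding base_polytope_def by blast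
  then show ?thesis
    using lattice_iso_refl orbit_polytope_eq_base_polytope[OF assms(1,4,5)] by simp
qed

end
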